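(* Let $I$ be a bounded open interval containing $0$ and let $f\in C^\infty(I)$ be real-valued. For integers $k\ge 1$, $n\ge 0$ and $t\in I$ put $$f_{k,n}(t):=\frac{(-1)^n}{n!}\,t^n f^{(n+k)}(t).$$ Suppose that for some integer $k\ge1$ the sequence $(f_{k,n})_{n\ge0}$ converges uniformly on $I$. (a) If $k\ge 2$, then the series $\hat f(t)$ converges uniformly on $I$ and $\hat f(t)=f(0)$ for all $t\in I$. (b) If $k=1$, let $\check f(t):=\lim_{n\to\infty}f_{1,n}(t)$ (uniform limit on $I$). Then $\hat f$ converges uniformly on $I$, its sum is differentiable on $I$, and $\frac{d}{dt}\hat f(t)=\check f(t)$ for all $t\in I$. In particular, if $\check f\equiv 0$ on $I$ (i.e. $\frac{(-1)^n}{n!}t^nf^{(n+1)}(t)\to0$ uniformly on $I$), then $\hat f(t)=f(0)$ for all $t\in I$.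
   Context: For a smooth function $f$ on an interval containing the point $t$, $\hat f(t)$ denotes the series $\hat f(t):=\sum_{n=0}^{\infty}\frac{(-1)^n}{n!}\,t^n f^{(n)}(t)$; "$\hat f$ converges (uniformly) on a set" means its partial sums $\sum_{n=0}^N\frac{(-1)^n}{n!}t^nf^{(n)}(t)$ converge (uniformly) on that set, and $\hat f(t)$ also denotes the sum. *)

theory Defs
  imports "HOL-Analysis.Analysis"
begin

definition nderiv :: "nat \<Rightarrow> (real \<Rightarrow> real) \<Rightarrow> real \<Rightarrow> real" where
  "nderiv n f = (deriv ^^ n) f"

definition smooth_on :: "real set \<Rightarrow> (real \<Rightarrow> real) \<Rightarrow> bool" where
  "smooth_on S f \<longleftrightarrow> (\<forall>n. \<forall>t\<in>S. (nderiv n f has_real_derivative nderiv (Suc n) f t) (at t))"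

definition fkn :: "(real \<Rightarrow> real) \<Rightarrow> nat \<Rightarrow> nat \<Rightarrow> real \<Rightarrow> real" where
  "fkn f k n t = (-1)^n / fact n * t^n * nderiv (n + k) f t"

definition fhat_term :: "(real \<Rightarrow> real) \<Rightarrow> nat \<Rightarrow> real \<Rightarrow> real" where
  "fhat_term f n t = (-1)^n / fact n * t^n * nderiv n f t"

definition fhat_partial :: "(real \<Rightarrow> real) \<Rightarrow> nat \<Rightarrow> real \<Rightarrow> real" where
  "fhat_partial f N t = (\<Sum>n\<le>N. fhat_term f n t)"

definition fhat :: "(real \<Rightarrow> real) \<Rightarrow> real \<Rightarrow> real" where
  "fhat f t = (\<Sum>n. fhat_term f n t)"

definition fcheck :: "(real \<Rightarrow> real) \<Rightarrow> real \<Rightarrow> real" where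
  "fcheck f t = lim (\<lambda>n. fkn f 1 n t)"

end

theory Submission
  imports Defs
begin

text \<open>
  Everything rests on two derivative identities: the partial sums of \<open>\<hat>f\<close>
  telescope under differentiation, \<open>(\<Sum>n\<le>N. f\<^sub>0\<^sub>,\<^sub>n)' = f\<^sub>1\<^sub>,\<^sub>N\<close>, and
  \<open>(f\<^sub>j\<^sub>,\<^sub>n\<^sub>+\<^sub>1)' = f\<^sub>j\<^sub>+\<^sub>1\<^sub>,\<^sub>n\<^sub>+\<^sub>1 - f\<^sub>j\<^sub>+\<^sub>1\<^sub>,\<^sub>n\<close>; moreover all these functions take
  known values at \<open>t = 0\<close>. The analytic tool is the classical theorem on differentiating
  sequences: on a bounded convex set, uniform convergence of the derivatives together with
  convergence at one point gives uniform convergence of the functions, and the limit has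
  the limit of the derivatives as derivative.

  Applied to \<open>f\<^sub>j\<^sub>,\<^sub>n\<^sub>+\<^sub>1\<close>, this shows that uniform convergence of \<open>(f\<^sub>j\<^sub>+\<^sub>1\<^sub>,\<^sub>n)\<close> forces
  \<open>f\<^sub>j\<^sub>,\<^sub>n \<rightarrow> 0\<close> uniformly; iterating, \<open>k \<ge> 2\<close> gives \<open>f\<^sub>1\<^sub>,\<^sub>n \<rightarrow> 0\<close>. Applied to the partial
  sums of \<open>\<hat>f\<close>, it gives part (b), and when \<open>f\<^sub>1\<^sub>,\<^sub>n \<rightarrow> 0\<close> the sum has derivative 0 and
  value \<open>f(0)\<close> at 0, hence is constantly \<open>f(0)\<close>, which is part (a).
\<close>

section \<open>Differentiating uniformly convergent sequences\<close>

text \<open>Uniform convergence of real derivatives \<open>F' n \<rightarrow> G\<close>, restated for the derivatives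
  as linear maps \<open>h \<mapsto> F' n x * h\<close>, in the form used by the library's theorems on
  differentiating sequences.\<close>

lemma derivative_maps_close_of_uniform_limit:
  fixes F' :: "nat \<Rightarrow> real \<Rightarrow> real"
  assumes F'_lim: "uniform_limit S F' G sequentially" and e: "e > 0"
  shows "\<forall>\<^sub>F n in sequentially. \<forall>x\<in>S. \<forall>h. norm (F' n x * h - G x * h) \<le> e * norm h"
  using uniform_limitD[OF F'_lim e]
proof eventually_elim
  case (elim n)
  show ?case
  proof (intro ballI allI)
    fix x h assume "x \<in> S"
    with elim have "\<bar>F' n x - G x\<bar> \<le> e"
      by (simp add: dist_real_def less_imp_le)
    then show "norm (F' n x * h - G x * h) \<le> e * norm h"
      by (simp add: left_diff_distrib[symmetric] abs_mult mult_right_mono)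
  qed
qed

text \<open>On a bounded convex set, uniformly convergent derivatives and convergence at one point
  make the sequence uniformly Cauchy: by the mean value inequality, \<open>F m - F n\<close> differs
  from its value at \<open>x0\<close> by at most \<open>sup \<bar>F' m - F' n\<bar> \<cdot> diam S\<close>.\<close>

lemma uniformly_Cauchy_of_derivatives:
  fixes F F' :: "nat \<Rightarrow> real \<Rightarrow> real" and S :: "real set"
  assumes S: "convex S" "bounded S" "x0 \<in> S"
    and F_deriv: "\<And>n x. x \<in> S \<Longrightarrow> (F n has_derivative (\<lambda>h. F' n x * h)) (at x within S)"
    and F'_lim: "uniform_limit S F' G sequentially"
    and F_x0: "convergent (\<lambda>n. F n x0)"
  shows "uniformly_Cauchy_on S F"
proof (rule uniformly_Cauchy_onI)
  fix e :: real assume e: "e > 0"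
  obtain r where r: "r > 0" "S \<subseteq> ball x0 r"
    using bounded_subset_ballD[OF S(2)] by blast
  obtain N1 where N1: "\<forall>m\<ge>N1. \<forall>n\<ge>N1. \<forall>x\<in>S. \<forall>y\<in>S.
      norm ((F m x - F n x) - (F m y - F n y)) \<le> e / (2 * r) * norm (x - y)"
    using has_derivative_sequence_Lipschitz[OF S(1) F_deriv
        derivative_maps_close_of_uniform_limit[OF F'_lim], of "e / (2 * r)"] e r(1)
    by auto
  obtain N2 where N2: "\<forall>m\<ge>N2. \<forall>n\<ge>N2. dist (F m x0) (F n x0) < e / 2"
    using F_x0 e unfolding Cauchy_convergent_iff[symmetric] Cauchy_def by (meson half_gt_zero)
  show "\<exists>M. \<forall>x\<in>S. \<forall>m\<ge>M. \<forall>n\<ge>M. dist (F m x) (F n x) < e"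
  proof (intro exI[of _ "max N1 N2"] ballI allI impI)
    fix x m n assume x: "x \<in> S" and mn: "max N1 N2 \<le> m" "max N1 N2 \<le> n"
    have "\<bar>x - x0\<bar> \<le> r"
      using r(2) x by (auto simp: dist_real_def)
    have "\<bar>(F m x - F n x) - (F m x0 - F n x0)\<bar> \<le> e / (2 * r) * \<bar>x - x0\<bar>"
      using N1 mn x S(3) by auto
    also have "\<dots> \<le> e / (2 * r) * r"
      using \<open>\<bar>x - x0\<bar> \<le> r\<close> e r(1) by (intro mult_left_mono) auto
    also have "\<dots> = e / 2"
      using r(1) by simp
    finally have near_x: "\<bar>(F m x - F n x) - (F m x0 - F n x0)\<bar> \<le> e / 2" .
    have near_x0: "\<bar>F m x0 - F n x0\<bar> < e / 2"
      using N2 mn by (simp add: dist_real_def)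
    have "dist (F m x) (F n x) \<le> \<bar>(F m x - F n x) - (F m x0 - F n x0)\<bar> + \<bar>F m x0 - F n x0\<bar>"
      using abs_triangle_ineq[of "(F m x - F n x) - (F m x0 - F n x0)" "F m x0 - F n x0"]
      by (simp add: dist_real_def)
    also have "\<dots> < e / 2 + e / 2"
      using near_x near_x0 by (rule add_le_less_mono)
    finally show "dist (F m x) (F n x) < e"
      by simp
  qed
qed

lemma uniform_limit_of_derivatives:
  fixes F F' :: "nat \<Rightarrow> real \<Rightarrow> real" and S :: "real set"
  assumes S: "convex S" "bounded S" "x0 \<in> S"
    and F_deriv: "\<And>n x. x \<in> S \<Longrightarrow> (F n has_real_derivative F' n x) (at x within S)"
    and F'_lim: "uniform_limit S F' G sequentially"
    and F_x0: "(\<lambda>n. F n x0) \<longlonglongrightarrow> c"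
  obtains H where "uniform_limit S F H sequentially" and "H x0 = c"
    and "\<And>x. x \<in> S \<Longrightarrow> (H has_real_derivative G x) (at x within S)"
proof -
  have F_deriv': "(F n has_derivative (\<lambda>h. F' n x * h)) (at x within S)" if "x \<in> S" for n x
    using F_deriv[OF that] by (simp add: has_field_derivative_def)
  have "uniformly_Cauchy_on S F"
    using F_x0 by (intro uniformly_Cauchy_of_derivatives[OF S F_deriv' F'_lim]) (auto simp: convergent_def)
  then obtain H where H: "uniform_limit S F H sequentially"
    using Cauchy_uniformly_convergent uniformly_convergent_on_def by blast
  have H_x0: "H x0 = c"
    using LIMSEQ_unique[OF tendsto_uniform_limitI[OF H S(3)] F_x0] .
  have "\<exists>H'. \<forall>x\<in>S.
      (\<lambda>n. F n x) \<longlonglongrightarrow> H' x \<and> (H' has_derivative (\<lambda>h. G x * h)) (at x within S)"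
    by (rule has_derivative_sequence[where f'="\<lambda>n x h. F' n x * h" and g'="\<lambda>x h. G x * h",
          OF S(1) F_deriv' derivative_maps_close_of_uniform_limit[OF F'_lim] S(3) F_x0])
  then obtain H' where H': "\<forall>x\<in>S.
      (\<lambda>n. F n x) \<longlonglongrightarrow> H' x \<and> (H' has_derivative (\<lambda>h. G x * h)) (at x within S)"
    by blast
  have H_eq: "H y = H' y" if "y \<in> S" for y
  proof -
    have "(\<lambda>n. F n y) \<longlonglongrightarrow> H' y"
      using H' that by blast
    with tendsto_uniform_limitI[OF H that] show ?thesis
      by (rule LIMSEQ_unique)
  qed
  have "(H has_real_derivative G x) (at x within S)" if x: "x \<in> S" for x
  proof -
    have "(H' has_derivative (\<lambda>h. G x * h)) (at x within S)"
      using H' x by blast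
    from has_derivative_transform[OF x H_eq this] show ?thesis
      by (simp add: has_field_derivative_def)
  qed
  with H H_x0 show thesis by (rule that)
qed

lemma uniform_limit_const_of_derivatives_to_zero:
  fixes F F' :: "nat \<Rightarrow> real \<Rightarrow> real" and S :: "real set"
  assumes S: "convex S" "bounded S" "x0 \<in> S"
    and F_deriv: "\<And>n x. x \<in> S \<Longrightarrow> (F n has_real_derivative F' n x) (at x within S)"
    and F'_lim: "uniform_limit S F' (\<lambda>_. 0) sequentially"
    and F_x0: "(\<lambda>n. F n x0) \<longlonglongrightarrow> c"
  shows "uniform_limit S F (\<lambda>_. c) sequentially"
proof -
  obtain H where H: "uniform_limit S F H sequentially" and H_x0: "H x0 = c"
    and H_deriv: "\<And>x. x \<in> S \<Longrightarrow> (H has_real_derivative 0) (at x within S)"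
    using uniform_limit_of_derivatives[OF S F_deriv F'_lim F_x0] by blast
  have H_deriv0: "(H has_derivative (\<lambda>h. 0)) (at x within S)" if "x \<in> S" for x
    using H_deriv[OF that] by (simp add: has_field_derivative_def lambda_zero)
  have "H x = c" if "x \<in> S" for x
    using has_derivative_zero_unique[OF S(1) H_deriv0 that S(3)] H_x0 by simp
  then show ?thesis
    using H by (simp cong: uniform_limit_cong')
qed

text \<open>The derivative statements below hold at every point of \<open>S\<close>, hence also within any set
  \<open>T\<close>; they are stated in that form because the sequence theorems above work within \<open>S\<close>.\<close>

lemma smooth_on_has_derivative:
  assumes "smooth_on S f" "t \<in> S"
  shows "(nderiv n f has_real_derivative nderiv (Suc n) f t) (at t within T)"
  using assms unfolding smooth_on_def by (blast intro: has_field_derivative_at_within)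

lemma fkn_Suc_has_derivative:
  assumes "smooth_on S f" "t \<in> S"
  shows "(fkn f j (Suc n) has_real_derivative fkn f (Suc j) (Suc n) t - fkn f (Suc j) n t)
    (at t within T)"
  unfolding fkn_def[abs_def]
  by (rule derivative_eq_intros refl smooth_on_has_derivative[OF assms])+
    (simp add: divide_simps algebra_simps del: of_nat_Suc)

lemma fkn_Suc_at_zero: "fkn f j (Suc n) 0 = 0"
  by (simp add: fkn_def)

lemma fhat_partial_at_zero: "fhat_partial f N 0 = f 0"
  by (induction N) (auto simp: fhat_partial_def fhat_term_def nderiv_def)

text \<open>The derivative of the \<open>N\<close>-th partial sum of \<open>\<hat>f\<close> telescopes to \<open>f\<^sub>1\<^sub>,\<^sub>N\<close>.\<close>

lemma fhat_partial_has_derivative: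
  assumes "smooth_on S f" "t \<in> S"
  shows "(fhat_partial f N has_real_derivative fkn f 1 N t) (at t within T)"
proof (induction N)
  case 0
  have "fhat_partial f 0 = nderiv 0 f"
    by (simp add: fhat_partial_def fhat_term_def fun_eq_iff)
  then show ?case
    using smooth_on_has_derivative[OF assms, of 0] by (simp add: fkn_def)
next
  case (Suc N)
  have "fhat_partial f (Suc N) = (\<lambda>t. fhat_partial f N t + fkn f 0 (Suc N) t)"
    by (simp add: fhat_partial_def fhat_term_def fkn_def fun_eq_iff)
  with DERIV_add[OF Suc fkn_Suc_has_derivative[OF assms, of 0 N]] show ?case
    by simp
qed

text \<open>The series \<open>\<hat>f\<close> is summed through its partial sums up to \<open>N\<close> inclusive.\<close>

lemma fhat_term_sums_iff: "(\<lambda>n. fhat_term f n t) sums s \<longleftrightarrow> (\<lambda>N. fhat_partial f N t) \<longlonglongrightarrow> s"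
  unfolding sums_def fhat_partial_def LIMSEQ_lessThan_iff_atMost ..

section \<open>Descent in \<open>k\<close>\<close>

text \<open>Uniform convergence of \<open>(f\<^sub>j\<^sub>+\<^sub>1\<^sub>,\<^sub>n)\<^sub>n\<close> forces \<open>f\<^sub>j\<^sub>,\<^sub>n \<rightarrow> 0\<close> uniformly: the derivatives of
  \<open>f\<^sub>j\<^sub>,\<^sub>n\<^sub>+\<^sub>1\<close> are differences of consecutive terms of a uniformly convergent sequence,
  and \<open>f\<^sub>j\<^sub>,\<^sub>n\<^sub>+\<^sub>1(0) = 0\<close>.\<close>

lemma fkn_descent_step:
  assumes S: "convex S" "bounded S" "0 \<in> S" and f: "smooth_on S f"
    and conv: "uniformly_convergent_on S (fkn f (Suc j))"
  shows "uniform_limit S (fkn f j) (\<lambda>_. 0) sequentially"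
proof -
  obtain g where g: "uniform_limit S (fkn f (Suc j)) g sequentially"
    using conv unfolding uniformly_convergent_on_def by blast
  then have "uniform_limit S (\<lambda>n. fkn f (Suc j) (Suc n)) g sequentially"
    by (simp add: filterlim_sequentially_Suc)
  from uniform_limit_minus[OF this g]
  have deriv_lim: "uniform_limit S (\<lambda>n t. fkn f (Suc j) (Suc n) t - fkn f (Suc j) n t) (\<lambda>_. 0) sequentially"
    by simp
  have "uniform_limit S (\<lambda>n. fkn f j (Suc n)) (\<lambda>_. 0) sequentially"
  proof (rule uniform_limit_const_of_derivatives_to_zero[OF S _ deriv_lim])
    show "(fkn f j (Suc n) has_real_derivative fkn f (Suc j) (Suc n) t - fkn f (Suc j) n t)
        (at t within S)" if "t \<in> S" for n t
      using f that by (rule fkn_Suc_has_derivative)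
    show "(\<lambda>n. fkn f j (Suc n) 0) \<longlonglongrightarrow> 0"
      by (simp add: fkn_Suc_at_zero)
  qed
  then show ?thesis
    by (simp add: filterlim_sequentially_Suc)
qed

lemma fkn_descent:
  assumes S: "convex S" "bounded S" "0 \<in> S" and f: "smooth_on S f"
    and conv: "uniformly_convergent_on S (fkn f k)" and "j < k"
  shows "uniform_limit S (fkn f j) (\<lambda>_. 0) sequentially"
proof -
  obtain d where k: "k = Suc j + d"
    using less_imp_Suc_add[OF \<open>j < k\<close>] by auto
  from conv show ?thesis
    unfolding k
  proof (induction d arbitrary: j)
    case 0
    then show ?case by (intro fkn_descent_step[OF S f]) simp
  next
    case (Suc d)
    then have "uniform_limit S (fkn f (Suc j)) (\<lambda>_. 0) sequentially"
      by simp
    then show ?case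
      by (intro fkn_descent_step[OF S f]) (auto simp: uniformly_convergent_on_def)
  qed
qed

lemma fhat_uniform_limit_const:
  assumes S: "convex S" "bounded S" "0 \<in> S" and f: "smooth_on S f"
    and vanish: "uniform_limit S (fkn f 1) (\<lambda>_. 0) sequentially"
  shows "uniform_limit S (fhat_partial f) (\<lambda>_. f 0) sequentially"
proof -
  have "(\<lambda>n. fhat_partial f n 0) \<longlonglongrightarrow> f 0"
    by (simp add: fhat_partial_at_zero)
  with fhat_partial_has_derivative[OF f] vanish show ?thesis
    by (rule uniform_limit_const_of_derivatives_to_zero[OF S])
qed

lemma fhat_sums_value_at_zero:
  assumes S: "convex S" "bounded S" "0 \<in> S" and f: "smooth_on S f"
    and vanish: "uniform_limit S (fkn f 1) (\<lambda>_. 0) sequentially" and t: "t \<in> S"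
  shows "(\<lambda>n. fhat_term f n t) sums f 0"
  using tendsto_uniform_limitI[OF fhat_uniform_limit_const[OF S f vanish] t]
  by (simp add: fhat_term_sums_iff)

lemma uniform_limit_fcheck:
  assumes "uniformly_convergent_on S (fkn f 1)"
  shows "uniform_limit S (fkn f 1) (fcheck f) sequentially"
  using assms unfolding fcheck_def[abs_def] uniformly_convergent_uniform_limit_iff .

lemma fhat_has_derivative_fcheck:
  assumes S: "open S" "convex S" "bounded S" "0 \<in> S" and f: "smooth_on S f"
    and conv: "uniformly_convergent_on S (fkn f 1)"
  shows "uniformly_convergent_on S (fhat_partial f)"
    and "\<And>t. t \<in> S \<Longrightarrow> (fhat f has_real_derivative fcheck f t) (at t)"
proof -
  have at_zero: "(\<lambda>n. fhat_partial f n 0) \<longlonglongrightarrow> f 0"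
    by (simp add: fhat_partial_at_zero)
  obtain H where H: "uniform_limit S (fhat_partial f) H sequentially"
    and H_deriv: "\<And>t. t \<in> S \<Longrightarrow> (H has_real_derivative fcheck f t) (at t within S)"
    using uniform_limit_of_derivatives[OF S(2-4)] fhat_partial_has_derivative[OF f]
      uniform_limit_fcheck[OF conv] at_zero
    by metis
  then show "uniformly_convergent_on S (fhat_partial f)"
    unfolding uniformly_convergent_on_def by blast
  have fhat_eq: "fhat f t = H t" if "t \<in> S" for t
    using tendsto_uniform_limitI[OF H that]
    unfolding fhat_def fhat_term_sums_iff[symmetric] by (rule sums_unique[symmetric])
  fix t assume t: "t \<in> S"
  have "(H has_real_derivative fcheck f t) (at t)"
    using H_deriv[OF t] at_within_open[OF t S(1)] by simp
  then show "(fhat f has_real_derivative fcheck f t) (at t)"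
    by (rule has_field_derivative_transform_within_open[OF _ S(1) t]) (simp add: fhat_eq)
qed

lemma fkn1_vanishes_if_fcheck_zero:
  assumes conv: "uniformly_convergent_on S (fkn f 1)" and zero: "\<And>t. t \<in> S \<Longrightarrow> fcheck f t = 0"
  shows "uniform_limit S (fkn f 1) (\<lambda>_. 0) sequentially"
  using uniform_limit_fcheck[OF conv] zero by (simp cong: uniform_limit_cong')

theorem theorem2:
  fixes f :: "real \<Rightarrow> real" and a b :: real and k :: nat
  assumes "a < 0" and "0 < b"
    and "smooth_on {a<..<b} f"
    and "k \<ge> 1"
    and "uniformly_convergent_on {a<..<b} (\<lambda>n. fkn f k n)"
  shows "(k \<ge> 2 \<longrightarrow>
            uniformly_convergent_on {a<..<b} (fhat_partial f) \<and>
            (\<forall>t\<in>{a<..<b}. (\<lambda>n. fhat_term f n t) sums f 0))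
       \<and> (k = 1 \<longrightarrow>
            uniformly_convergent_on {a<..<b} (fhat_partial f) \<and>
            (\<forall>t\<in>{a<..<b}. (fhat f has_real_derivative fcheck f t) (at t)) \<and>
            ((\<forall>t\<in>{a<..<b}. fcheck f t = 0) \<longrightarrow>
               (\<forall>t\<in>{a<..<b}. (\<lambda>n. fhat_term f n t) sums f 0)))"
proof -
  let ?S = "{a<..<b}"
  have S: "open ?S" "convex ?S" "bounded ?S" "0 \<in> ?S"
    using assms(1,2) by auto
  note f = assms(3)
  have part_a: "uniformly_convergent_on ?S (fhat_partial f) \<and>
      (\<forall>t\<in>?S. (\<lambda>n. fhat_term f n t) sums f 0)" if "k \<ge> 2"
  proof -
    have vanish: "uniform_limit ?S (fkn f 1) (\<lambda>_. 0) sequentially"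
      using fkn_descent[OF S(2-4) f assms(5), of 1] that by simp
    show ?thesis
      using fhat_uniform_limit_const[OF S(2-4) f vanish] fhat_sums_value_at_zero[OF S(2-4) f vanish]
      unfolding uniformly_convergent_on_def by blast
  qed
  have part_b: "uniformly_convergent_on ?S (fhat_partial f) \<and>
      (\<forall>t\<in>?S. (fhat f has_real_derivative fcheck f t) (at t)) \<and>
      ((\<forall>t\<in>?S. fcheck f t = 0) \<longrightarrow> (\<forall>t\<in>?S. (\<lambda>n. fhat_term f n t) sums f 0))"
    if "k = 1"
  proof -
    from \<open>k = 1\<close> assms(5) have conv: "uniformly_convergent_on ?S (fkn f 1)"
      by simp
    have "uniform_limit ?S (fkn f 1) (\<lambda>_. 0) sequentially" if "\<forall>t\<in>?S. fcheck f t = 0"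
      using fkn1_vanishes_if_fcheck_zero[OF conv] that by blast
    then show ?thesis
      using fhat_has_derivative_fcheck[OF S f conv] fhat_sums_value_at_zero[OF S(2-4) f] by blast
  qed
  from part_a part_b show ?thesis
    by blast
qed

end
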